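(* Let $d$ be a positive integer and let $\mu$ be an isotropic Borel probability measure on $\mathbb{S}^{d-1}$ such that $\langle x,y\rangle\ge 0$ for all $x,y$ in the support of $\mu$. Then $\mu$ is the uniform distribution over an orthonormal basis, i.e. $\mu=\frac1d\sum_{j=1}^d\delta_{e_j}$ for some orthonormal basis $e_1,\dots,e_d$ of $\mathbb{R}^d$.
   Context: A Borel probability measure $\mu$ on $\mathbb{S}^{d-1}$ is isotropic if $\int_{\mathbb{S}^{d-1}}xx^T\,d\mu(x)=\frac1d I_d$, equivalently $\int\langle x,y\rangle^2\,d\mu(x)=\frac1d$ for every $y\in\mathbb{S}^{d-1}$. *)

theory Defs
  imports "HOL-Probability.Probability"
begin

definition measure_support :: "'a::topological_space measure \<Rightarrow> 'a set" where
  "measure_support M = {x. \<forall>U. open U \<and> x \<in> U \<longrightarrow> emeasure M U > 0}"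

definition isotropic :: "'a::euclidean_space measure \<Rightarrow> bool" where
  "isotropic M \<longleftrightarrow> (\<forall>y. norm y = 1 \<longrightarrow>
      (\<integral>x. (x \<bullet> y)^2 \<partial>M) = 1 / real DIM('a))"

end

theory Submission
  imports Defs
begin

text \<open>
  Let \<open>v = \<integral>x d\<mu>\<close> be the barycentre, \<open>d = DIM('a)\<close> and \<open>S\<close> the support of \<open>\<mu>\<close>.
  On \<open>S\<close> we have \<open>0 \<le> x \<bullet> y \<le> 1\<close>, hence \<open>(x \<bullet> y)\<^sup>2 \<le> x \<bullet> y\<close>, so isotropy gives
  \<open>1/d \<le> v \<bullet> y\<close> for every \<open>y \<in> S\<close>; integrating once more, \<open>1/d \<le> v \<bullet> v\<close>.
  Conversely the variance of \<open>x \<bullet> u\<close> in the direction \<open>u = v/\<bar>v\<bar>\<close> is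
  \<open>1/d - \<bar>v\<bar>\<^sup>2 \<ge> 0\<close>. So all these inequalities are equalities: the nonnegative
  continuous function \<open>x \<bullet> y - (x \<bullet> y)\<^sup>2\<close> integrates to zero and therefore vanishes
  on \<open>S\<close>. Thus \<open>S\<close> consists of pairwise orthogonal unit vectors, is finite, each
  atom has mass \<open>\<integral>(x \<bullet> e)\<^sup>2 = 1/d\<close>, and total mass one forces \<open>card S = d\<close>.
\<close>

lemma AE_in_measure_support:
  fixes M :: "'a::second_countable_topology measure"
  assumes "sets M = sets borel"
  shows "AE x in M. x \<in> measure_support M"
proof -
  obtain B :: "'a set set" where B: "countable B" "\<And>C. C \<in> B \<Longrightarrow> open C"
    "\<And>S. open S \<Longrightarrow> \<exists>U. U \<subseteq> B \<and> S = \<Union>U"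
    using univ_second_countable by blast
  let ?N = "\<Union>b\<in>{b\<in>B. emeasure M b = 0}. b"
  have "?N \<in> null_sets M"
    by (rule null_sets_UN') (use B assms in auto)
  moreover have "{x\<in>space M. x \<notin> measure_support M} \<subseteq> ?N"
  proof
    fix x assume "x \<in> {x\<in>space M. x \<notin> measure_support M}"
    then obtain U where U: "open U" "x \<in> U" "emeasure M U = 0"
      by (auto simp: measure_support_def zero_less_iff_neq_zero)
    obtain W where W: "W \<subseteq> B" "U = \<Union>W"
      using B(3) U(1) by blast
    then obtain b where b: "b \<in> W" "x \<in> b"
      using U by auto
    have "emeasure M b \<le> emeasure M U"
      by (rule emeasure_mono) (use W b U assms in auto)
    then show "x \<in> ?N"
      using U W b by auto
  qed
  ultimately show ?thesis
    by (rule AE_I')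
qed

lemma measure_support_disjoint_AE_open:
  assumes "sets M = sets borel" "open U" "AE x in M. x \<notin> U"
  shows "U \<inter> measure_support M = {}"
proof -
  have U: "U \<in> sets M"
    using assms by simp
  then have "{x\<in>space M. x \<in> U} = U"
    using sets.sets_into_space by auto
  then have "emeasure M U = 0"
    using AE_iff_measurable[of U M "\<lambda>x. x \<notin> U"] assms U by simp
  then show ?thesis
    using assms(2) by (auto simp: measure_support_def)
qed

lemma AE_eq_on_measure_support:
  fixes f g :: "'a::topological_space \<Rightarrow> 'b::t2_space"
  assumes "sets M = sets borel" "continuous_on UNIV f" "continuous_on UNIV g"
    and "AE x in M. f x = g x" "x \<in> measure_support M"
  shows "f x = g x"
proof -
  have "{x. f x \<noteq> g x} \<inter> measure_support M = {}"
    using assms(4)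
    by (intro measure_support_disjoint_AE_open[OF assms(1)] open_Collect_neq assms(2,3))
      (auto elim: eventually_mono)
  then show ?thesis
    using assms(5) by auto
qed

lemma integral_eq_0_imp_zero_on_measure_support:
  fixes f :: "'a::topological_space \<Rightarrow> real"
  assumes "sets M = sets borel" "continuous_on UNIV f" "integrable M f"
    and "AE x in M. 0 \<le> f x" "(\<integral>x. f x \<partial>M) = 0" "x \<in> measure_support M"
  shows "f x = 0"
  using AE_eq_on_measure_support[OF assms(1,2) continuous_on_const _ assms(6)] assms(3-5)
  by (simp add: integral_nonneg_eq_0_iff_AE)

lemma unit_vectors_eq_if_inner_eq_1:
  fixes x y :: "'a::real_inner"
  assumes "norm x = 1" "norm y = 1" "x \<bullet> y = 1"
  shows "x = y"
proof -
  have "x \<bullet> x = 1" "y \<bullet> y = 1"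
    using assms norm_eq_1 by auto
  then have "(x - y) \<bullet> (x - y) = 0"
    using assms(3) by (simp add: inner_diff_left inner_diff_right inner_commute)
  then show ?thesis
    by simp
qed

locale sphere_prob_space = prob_space mu for mu :: "'a::euclidean_space measure" +
  assumes sets_eq_borel: "sets mu = sets borel"
    and AE_norm_eq_1: "AE x in mu. norm x = 1"
begin

lemma norm_support: "x \<in> measure_support mu \<Longrightarrow> norm x = 1"
  using AE_eq_on_measure_support[OF sets_eq_borel _ _ AE_norm_eq_1]
  by (auto intro: continuous_intros)

lemma AE_in_support: "AE x in mu. x \<in> measure_support mu"
  using AE_in_measure_support[OF sets_eq_borel] .

lemma integrable_continuous:
  fixes f :: "'a \<Rightarrow> 'b::{banach, second_countable_topology}"
  assumes f: "continuous_on UNIV f"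
  shows "integrable mu f"
proof -
  have "bounded (f ` sphere 0 1)"
    by (intro compact_imp_bounded compact_continuous_image continuous_on_subset[OF f]) auto
  then obtain B where B: "\<forall>x\<in>sphere 0 1. norm (f x) \<le> B"
    by (auto simp: bounded_iff)
  show ?thesis
  proof (rule integrable_const_bound)
    show "AE x in mu. norm (f x) \<le> B"
      using AE_norm_eq_1 B by (auto elim: eventually_mono)
    show "f \<in> borel_measurable mu"
      unfolding measurable_cong_sets[OF sets_eq_borel refl]
      using f by (rule borel_measurable_continuous_onI)
  qed
qed

lemma integrable_inner: "integrable mu (\<lambda>x. x \<bullet> y)"
  and integrable_inner_sq: "integrable mu (\<lambda>x. (x \<bullet> y)\<^sup>2)"
  and integrable_id: "integrable mu (\<lambda>x. x)"
  by (auto intro!: integrable_continuous continuous_intros)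

definition barycenter :: 'a where
  "barycenter = (\<integral>x. x \<partial>mu)"

lemma integral_inner_barycenter: "(\<integral>x. x \<bullet> y \<partial>mu) = barycenter \<bullet> y"
  using integrable_id by (simp add: barycenter_def)

end

locale isotropic_sphere_prob_space = sphere_prob_space +
  assumes isotropic: "isotropic mu"
begin

lemma integral_inner_sq: "norm y = 1 \<Longrightarrow> (\<integral>x. (x \<bullet> y)\<^sup>2 \<partial>mu) = 1 / DIM('a)"
  using isotropic by (simp add: isotropic_def)

lemma inner_barycenter_sq_le:
  assumes "norm u = 1"
  shows "(barycenter \<bullet> u)\<^sup>2 \<le> 1 / DIM('a)"
proof -
  have "0 \<le> variance (\<lambda>x. x \<bullet> u)"
    by (rule variance_positive)
  also have "\<dots> = 1 / DIM('a) - (barycenter \<bullet> u)\<^sup>2"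
    using variance_eq[OF integrable_inner integrable_inner_sq, of u] assms
    by (simp add: integral_inner_sq integral_inner_barycenter)
  finally show ?thesis
    by simp
qed

lemma barycenter_inner_self_le: "barycenter \<bullet> barycenter \<le> 1 / DIM('a)"
proof (cases "barycenter = 0")
  case False
  let ?u = "barycenter /\<^sub>R norm barycenter"
  have "barycenter \<bullet> ?u = norm barycenter"
    using False by (simp add: power2_norm_eq_inner[symmetric] power2_eq_square)
  then show ?thesis
    using inner_barycenter_sq_le[of ?u] False by (simp add: power2_norm_eq_inner)
qed simp

end

locale nonneg_isotropic_sphere_prob_space = isotropic_sphere_prob_space +
  assumes inner_support_nonneg:
    "x \<in> measure_support mu \<Longrightarrow> y \<in> measure_support mu \<Longrightarrow> 0 \<le> x \<bullet> y"
begin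

lemma inner_support_sq_le:
  assumes "x \<in> measure_support mu" "y \<in> measure_support mu"
  shows "(x \<bullet> y)\<^sup>2 \<le> x \<bullet> y"
proof -
  have "x \<bullet> y \<le> 1"
    using norm_cauchy_schwarz[of x y] norm_support assms by simp
  then show ?thesis
    using inner_support_nonneg[OF assms] by (simp add: power2_eq_square mult_left_le)
qed

lemma barycenter_inner_support_ge:
  assumes "y \<in> measure_support mu"
  shows "1 / DIM('a) \<le> barycenter \<bullet> y"
proof -
  have "1 / DIM('a) = (\<integral>x. (x \<bullet> y)\<^sup>2 \<partial>mu)"
    using integral_inner_sq norm_support assms by simp
  also have "\<dots> \<le> (\<integral>x. x \<bullet> y \<partial>mu)"
    using AE_in_support
    by (intro integral_mono_AE integrable_inner integrable_inner_sq)
      (auto elim: eventually_mono intro: inner_support_sq_le assms)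
  finally show ?thesis
    by (simp add: integral_inner_barycenter)
qed

lemma barycenter_inner_self: "barycenter \<bullet> barycenter = 1 / DIM('a)"
proof -
  have "1 / DIM('a) = (\<integral>x. 1 / DIM('a) \<partial>mu)"
    by (simp add: prob_space)
  also have "\<dots> \<le> (\<integral>x. x \<bullet> barycenter \<partial>mu)"
  proof (rule integral_mono_AE[OF _ integrable_inner])
    show "AE x in mu. 1 / DIM('a) \<le> x \<bullet> barycenter"
      using AE_in_support
      by (rule eventually_mono) (metis barycenter_inner_support_ge inner_commute)
  qed simp
  finally show ?thesis
    using barycenter_inner_self_le by (simp add: integral_inner_barycenter)
qed

lemma barycenter_inner_support:
  assumes "y \<in> measure_support mu"
  shows "barycenter \<bullet> y = 1 / DIM('a)"
proof -
  have "barycenter \<bullet> y - 1 / DIM('a) = 0"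
  proof (rule integral_eq_0_imp_zero_on_measure_support[OF sets_eq_borel, of "\<lambda>x. barycenter \<bullet> x - 1 / DIM('a)"])
    show "integrable mu (\<lambda>x. barycenter \<bullet> x - 1 / DIM('a))"
      by (intro integrable_continuous continuous_intros)
    show "(\<integral>x. barycenter \<bullet> x - 1 / DIM('a) \<partial>mu) = 0"
      using integrable_id barycenter_inner_self by (simp add: prob_space barycenter_def)
    show "AE x in mu. 0 \<le> barycenter \<bullet> x - 1 / DIM('a)"
      using AE_in_support by (auto elim: eventually_mono simp: barycenter_inner_support_ge)
  qed (use assms in \<open>auto intro!: continuous_intros\<close>)
  then show ?thesis
    by simp
qed

lemma inner_support_eq_0_or_1:
  assumes "x \<in> measure_support mu" "y \<in> measure_support mu"
  shows "x \<bullet> y = 0 \<or> x \<bullet> y = 1"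
proof -
  have "x \<bullet> y - (x \<bullet> y)\<^sup>2 = 0"
  proof (rule integral_eq_0_imp_zero_on_measure_support[OF sets_eq_borel, of "\<lambda>x. x \<bullet> y - (x \<bullet> y)\<^sup>2"])
    show "integrable mu (\<lambda>x. x \<bullet> y - (x \<bullet> y)\<^sup>2)"
      by (intro integrable_continuous continuous_intros)
    show "(\<integral>x. x \<bullet> y - (x \<bullet> y)\<^sup>2 \<partial>mu) = 0"
      using integrable_inner integrable_inner_sq norm_support[OF assms(2)]
      by (simp add: integral_inner_barycenter integral_inner_sq barycenter_inner_support assms(2))
    show "AE x in mu. 0 \<le> x \<bullet> y - (x \<bullet> y)\<^sup>2"
      using AE_in_support by (auto elim: eventually_mono dest: inner_support_sq_le[OF _ assms(2)])
  qed (use assms in \<open>auto intro!: continuous_intros\<close>)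
  then show ?thesis
    by (simp add: power2_eq_square algebra_simps)
qed

lemma pairwise_orthogonal_support: "pairwise orthogonal (measure_support mu)"
  using inner_support_eq_0_or_1 unit_vectors_eq_if_inner_eq_1 norm_support
  unfolding pairwise_def orthogonal_def by blast

lemma independent_support: "independent (measure_support mu)"
  using pairwise_orthogonal_independent[OF pairwise_orthogonal_support] norm_support by force

lemma finite_support: "finite (measure_support mu)"
  using independent_bound[OF independent_support] by simp

lemma measure_singleton_support:
  assumes "e \<in> measure_support mu"
  shows "measure mu {e} = 1 / DIM('a)"
proof -
  have "1 / DIM('a) = (\<integral>x. (x \<bullet> e)\<^sup>2 \<partial>mu)"
    using integral_inner_sq norm_support assms by simp
  also have "\<dots> = (\<integral>x. indicator {e} x \<partial>mu)"
  proof (rule integral_cong_AE)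
    show "(\<lambda>x. (x \<bullet> e)\<^sup>2) \<in> borel_measurable mu"
      using integrable_inner_sq by blast
    show "(\<lambda>x. indicator {e} x :: real) \<in> borel_measurable mu"
      using sets_eq_borel by simp
    have "(x \<bullet> e)\<^sup>2 = indicator {e} x" if "x \<in> measure_support mu" for x
      using inner_support_eq_0_or_1[OF that assms] unit_vectors_eq_if_inner_eq_1[of x e]
        norm_support[OF that] norm_support[OF assms] norm_eq_1[of e]
      by (cases "x = e") auto
    then show "AE x in mu. (x \<bullet> e)\<^sup>2 = indicator {e} x"
      using AE_in_support by (auto elim: eventually_mono)
  qed
  also have "\<dots> = measure mu {e}"
    using sets_eq_borel by simp
  finally show ?thesis
    by simp
qed

lemma emeasure_eq_card_support:
  assumes A: "A \<in> sets mu"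
  shows "emeasure mu A = ennreal (card (A \<inter> measure_support mu) / DIM('a))"
proof -
  let ?F = "A \<inter> measure_support mu"
  have finite: "finite ?F"
    using finite_support by simp
  have "emeasure mu A = emeasure mu ?F"
    using AE_in_support A sets_eq_borel finite_imp_closed[OF finite]
    by (intro emeasure_eq_AE) (auto elim: eventually_mono)
  also have "\<dots> = (\<Sum>e\<in>?F. emeasure mu {e})"
    using sets_eq_borel by (intro emeasure_eq_sum_singleton finite) simp
  also have "\<dots> = (\<Sum>e\<in>?F. ennreal (1 / DIM('a)))"
    by (intro sum.cong) (auto simp: emeasure_eq_measure measure_singleton_support)
  also have "\<dots> = ennreal (card ?F / DIM('a))"
    by (simp add: ennreal_of_nat_eq_real_of_nat ennreal_mult'[symmetric])
  finally show ?thesis .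
qed

lemma card_support: "card (measure_support mu) = DIM('a)"
proof -
  have "ennreal (card (measure_support mu) / DIM('a)) = 1"
    using emeasure_eq_card_support[OF sets.top] emeasure_space_1
    by (simp add: sets_eq_imp_space_eq[OF sets_eq_borel]) (metis DIM_positive)
  then show ?thesis
    by (simp add: ennreal_eq_1)
qed

lemma span_support: "span (measure_support mu) = UNIV"
proof -
  have "UNIV \<subseteq> span (measure_support mu)"
    by (rule card_ge_dim_independent[OF _ independent_support]) (simp_all add: card_support)
  then show ?thesis
    by auto
qed

end

theorem theorem5p1:
  fixes mu :: "'a::euclidean_space measure"
  assumes "prob_space mu"
    and "sets mu = sets borel"
    and "emeasure mu (sphere 0 1) = 1"
    and "isotropic mu"
    and "\<forall>x\<in>measure_support mu. \<forall>y\<in>measure_support mu. x \<bullet> y \<ge> 0"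
  shows "\<exists>B. finite B \<and> card B = DIM('a) \<and> span B = UNIV \<and>
              pairwise orthogonal B \<and> (\<forall>e\<in>B. norm e = 1) \<and>
              (\<forall>A\<in>sets mu. emeasure mu A = ennreal (real (card (A \<inter> B)) / real DIM('a)))"
proof -
  interpret prob_space mu by fact
  have "AE x in mu. x \<in> sphere 0 1"
    using assms(3) by (intro AE_prob_1) (simp add: emeasure_eq_measure)
  then have "AE x in mu. norm x = 1"
    by (auto elim: eventually_mono)
  then interpret nonneg_isotropic_sphere_prob_space mu
    using assms by unfold_locales auto
  show ?thesis
    using finite_support card_support span_support pairwise_orthogonal_support
      norm_support emeasure_eq_card_support by blast
qed

end
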